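(* Let $L$ be a shift and $\mu$ a $\sigma$-invariant, nonatomic, regular Borel probability measure on $L$ that is positive on nonempty cylinders. For each letter $a\in A$ let $I_{L,a}=\{x\in I:\phi^{-1}(\iota(x))\in Cyl_L(a)\}$, where $I=[0,1)$. Then $I=\bigsqcup_{a\in A}I_{L,a}$, and each nonempty $I_{L,a}$ is a right-open interval. Moreover $T_L$ is right-continuous on $I$ and increasing on each $I_{L,a}$.
   Context: $A$ is a finite totally ordered alphabet. $A^{\mathbb N}$ has the lexicographic order and the Cantor topology, and $\sigma$ deletes the first letter. A shift is a closed $L\subseteq A^{\mathbb N}$ with $\sigma(L)\subseteq L$, and $Cyl_L(v)=\{w\in L:v\text{ prefix of }w\}$. For $w\le w'$ in $L$, $[w,w']=\{w''\in L:w\le w''\le w'\}$, and $w_{L,min}=\min L$. Construction. Put $\phi_\mu(w)=\mu([w_{L,min},w])$. Let $Z_0$ be the set of $x\in[0,1]$ with $|\phi_\mu^{-1}(x)|\ge 2$; each such preimage consists of exactly two consecutive words. Let $\hat I=[0,1]\sqcup Z_0^-$, where $Z_0^-=\{z^-:z\in Z_0\}$ is a disjoint copy of $Z_0$. Order $\hat I$ so that $z^-<z$ with nothing in between, extending the order of $[0,1]$, and give it the order topology. Let $\iota$ be the inclusion $[0,1]\to\hat I$, and let $\kappa:\hat I\to[0,1]$ be the identity on $[0,1]$ with $z^-\mapsto z$. Define $\phi(w)=(\phi_\mu(w))^-$ if $\phi_\mu^{-1}(\phi_\mu(w))=\{w,w'\}$ with $w<w'$, and $\phi(w)=\phi_\mu(w)$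 otherwise. Set $\hat T=\phi\circ\sigma\circ\phi^{-1}$ and $T_L=\kappa\circ\hat T\circ\iota:[0,1]\to[0,1]$. *)

theory Defs
  imports "HOL-Analysis.Analysis" "HOL-Probability.Probability"
begin

type_synonym 'a word = "nat \<Rightarrow> 'a"

definition shft :: "'a word \<Rightarrow> 'a word" where
  "shft w = (\<lambda>n. w (Suc n))"

definition lex_less :: "('a::linorder) word \<Rightarrow> 'a word \<Rightarrow> bool" where
  "lex_less w w' \<longleftrightarrow> (\<exists>n. (\<forall>i<n. w i = w' i) \<and> w n < w' n)"

definition lex_le :: "('a::linorder) word \<Rightarrow> 'a word \<Rightarrow> bool" where
  "lex_le w w' \<longleftrightarrow> w = w' \<or> lex_less w w'"

definition cantor_top :: "'a word topology" where
  "cantor_top = product_topology (\<lambda>_. discrete_topology UNIV) UNIV"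

definition is_shift :: "('a::{linorder,finite}) word set \<Rightarrow> bool" where
  "is_shift L \<longleftrightarrow> closedin cantor_top L \<and> shft ` L \<subseteq> L"

definition Cyl :: "'a word set \<Rightarrow> 'a list \<Rightarrow> 'a word set" where
  "Cyl L v = {w \<in> L. \<forall>i<length v. w i = v ! i}"

definition borel_sets_on :: "'a word set \<Rightarrow> 'a word set set" where
  "borel_sets_on L = sigma_sets L {L \<inter> U | U. openin cantor_top U}"

definition is_borel_prob_on :: "'a word set \<Rightarrow> 'a word measure \<Rightarrow> bool" where
  "is_borel_prob_on L M \<longleftrightarrow> prob_space M \<and> space M = L \<and> sets M = borel_sets_on L"

definition shift_invariant :: "'a word measure \<Rightarrow> bool" where
  "shift_invariant M \<longleftrightarrow> shft \<in> measurable M M \<and>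
     (\<forall>A\<in>sets M. emeasure M (shft -` A \<inter> space M) = emeasure M A)"

definition nonatomic :: "'b measure \<Rightarrow> bool" where
  "nonatomic M \<longleftrightarrow> (\<forall>A\<in>sets M. 0 < emeasure M A \<longrightarrow>
      (\<exists>B\<in>sets M. B \<subseteq> A \<and> 0 < emeasure M B \<and> emeasure M B < emeasure M A))"

definition regular_on :: "'a word set \<Rightarrow> 'a word measure \<Rightarrow> bool" where
  "regular_on L M \<longleftrightarrow> (\<forall>A\<in>sets M.
      emeasure M A = (SUP K\<in>{K. compactin cantor_top K \<and> K \<subseteq> A}. emeasure M K) \<and>
      emeasure M A = (INF U\<in>{U. openin (subtopology cantor_top L) U \<and> A \<subseteq> U}. emeasure M U))"

definition wmin :: "('a::linorder) word set \<Rightarrow> 'a word" where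
  "wmin L = (THE w. w \<in> L \<and> (\<forall>w'\<in>L. lex_le w w'))"

definition lex_Icc :: "('a::linorder) word set \<Rightarrow> 'a word \<Rightarrow> 'a word \<Rightarrow> 'a word set" where
  "lex_Icc L w w' = {v \<in> L. lex_le w v \<and> lex_le v w'}"

definition phi_mu :: "('a::linorder) word set \<Rightarrow> 'a word measure \<Rightarrow> 'a word \<Rightarrow> real" where
  "phi_mu L M w = measure M (lex_Icc L (wmin L) w)"

text \<open>The extended interval \<open>\<hat>I\<close> is represented inside \<open>real \<times> bool\<close>:
  \<open>(x, True)\<close> is the point \<open>x \<in> [0,1]\<close>, \<open>(z, False)\<close> is the extra point \<open>z\<^sup>-\<close>.\<close>
definition phi :: "('a::linorder) word set \<Rightarrow> 'a word measure \<Rightarrow> 'a word \<Rightarrow> real \<times> bool" where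
  "phi L M w = (if \<exists>w'. lex_less w w' \<and> {v \<in> L. phi_mu L M v = phi_mu L M w} = {w, w'}
                then (phi_mu L M w, False) else (phi_mu L M w, True))"

definition phi_inv :: "('a::linorder) word set \<Rightarrow> 'a word measure \<Rightarrow> real \<times> bool \<Rightarrow> 'a word" where
  "phi_inv L M = the_inv_into L (phi L M)"

definition iota :: "real \<Rightarrow> real \<times> bool" where
  "iota x = (x, True)"

definition kappa :: "real \<times> bool \<Rightarrow> real" where
  "kappa p = fst p"

definition T_hat :: "('a::linorder) word set \<Rightarrow> 'a word measure \<Rightarrow> real \<times> bool \<Rightarrow> real \<times> bool" where
  "T_hat L M = phi L M \<circ> shft \<circ> phi_inv L M"

definition T_L :: "('a::linorder) word set \<Rightarrow> 'a word measure \<Rightarrow> real \<Rightarrow> real" where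
  "T_L L M = kappa \<circ> T_hat L M \<circ> iota"

definition I_La :: "('a::linorder) word set \<Rightarrow> 'a word measure \<Rightarrow> 'a \<Rightarrow> real set" where
  "I_La L M a = {x \<in> {0..<1}. phi_inv L M (iota x) \<in> Cyl L [a]}"

end

theory Submission
  imports Defs
begin

text \<open>
  \<open>\<phi>\<^sub>\<mu>\<close> is the distribution function of \<open>\<mu>\<close> for the lexicographic order. Since \<open>\<mu>\<close> is
  non-atomic and \<open>L\<close> is compact, it maps \<open>L\<close> onto \<open>[0,1]\<close>, and since \<open>\<mu>\<close> charges every cylinder,
  no three words share a value. Hence every \<open>x \<in> [0,1)\<close> is coded by the largest word \<open>w\<^sub>x\<close> of its
  fibre, and \<open>x \<mapsto> w\<^sub>x\<close> is lexicographically increasing and right-continuous. The first letter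
  of \<open>w\<^sub>x\<close> is therefore a monotone step function of \<open>x\<close>, whose level sets are right-open
  intervals. Finally \<open>T\<^sub>L x = \<phi>\<^sub>\<mu> (\<sigma> w\<^sub>x)\<close>: right-continuity follows because cylinders shrink to
  null singletons, and on \<open>I\<^sub>L\<^sub>,\<^sub>a\<close> the \<open>\<sigma>\<close>-invariance of \<open>\<mu>\<close> gives \<open>T\<^sub>L y - T\<^sub>L x \<ge> y - x\<close>.
\<close>

section \<open>The lexicographic order on words\<close>

lemma lex_less_irrefl: "\<not> lex_less w w"
  by (auto simp: lex_less_def)

lemma lex_less_trans:
  assumes "lex_less u v" "lex_less v w" shows "lex_less u w"
proof -
  obtain n1 where n1: "\<forall>i<n1. u i = v i" "u n1 < v n1" using assms(1) by (auto simp: lex_less_def)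
  obtain n2 where n2: "\<forall>i<n2. v i = w i" "v n2 < w n2" using assms(2) by (auto simp: lex_less_def)
  show ?thesis
    unfolding lex_less_def using n1 n2
    by (cases n1 n2 rule: linorder_cases) (auto intro!: exI[of _ "min n1 n2"])
qed

lemma first_difference:
  assumes "u \<noteq> (v :: 'a word)"
  obtains n where "\<forall>i<n. u i = v i" "u n \<noteq> v n"
proof -
  have ex: "\<exists>k. u k \<noteq> v k" using assms by auto
  show thesis
    by (rule that[of "LEAST k. u k \<noteq> v k"]) (use LeastI_ex[OF ex] not_less_Least in auto)
qed

lemma lex_less_total:
  assumes "u \<noteq> v" shows "lex_less u v \<or> lex_less v u"
proof -
  obtain n where "\<forall>i<n. u i = v i" "u n \<noteq> v n" using first_difference[OF assms] .
  then show ?thesis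
    unfolding lex_less_def by (cases "u n < v n") (auto intro!: exI[of _ n] simp: neq_iff)
qed

lemma lex_less_asym: "lex_less u v \<Longrightarrow> \<not> lex_less v u"
  using lex_less_trans lex_less_irrefl by blast

lemma lex_le_trans: "lex_le u v \<Longrightarrow> lex_le v w \<Longrightarrow> lex_le u w"
  unfolding lex_le_def using lex_less_trans by blast

lemma lex_le_less_trans: "lex_le u v \<Longrightarrow> lex_less v w \<Longrightarrow> lex_less u w"
  unfolding lex_le_def using lex_less_trans by blast

lemma lex_le_antisym: "lex_le u v \<Longrightarrow> lex_le v u \<Longrightarrow> u = v"
  unfolding lex_le_def using lex_less_asym by blast

lemma lex_not_le: "\<not> lex_le u v \<longleftrightarrow> lex_less v u"
  unfolding lex_le_def using lex_less_total lex_less_asym lex_less_irrefl by blast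

lemma lex_not_less: "\<not> lex_less u v \<longleftrightarrow> lex_le v u"
  using lex_not_le by blast

lemma lex_le_first_letter: "lex_le v w \<Longrightarrow> v 0 \<le> w 0"
  unfolding lex_le_def lex_less_def by (metis le_less neq0_conv)

lemma lex_less_by_prefix:
  assumes "lex_less u v" "\<exists>i<n. u i \<noteq> v i" "\<forall>i<n. u' i = u i" "\<forall>i<n. v' i = v i"
  shows "lex_less u' v'"
proof -
  obtain k where k: "\<forall>i<k. u i = v i" "u k < v k" using assms(1) by (auto simp: lex_less_def)
  have "k < n" using assms(2) k(1) by (meson le_less_trans not_less)
  then show ?thesis using k assms(3,4) unfolding lex_less_def by (intro exI[of _ k]) auto
qed

lemma lex_between_agrees:
  assumes "lex_less u v" "lex_le v u'" "\<forall>i<n. u' i = u i"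
  shows "\<forall>i<n. v i = u i"
proof (rule ccontr)
  assume "\<not> (\<forall>i<n. v i = u i)"
  then have "\<exists>i<n. u i \<noteq> v i" by auto
  then have "lex_less u' v" by (rule lex_less_by_prefix[OF assms(1) _ assms(3)]) simp
  then show False using assms(2) lex_not_le by blast
qed

lemma shft_lex_less:
  assumes "u 0 = v 0" shows "lex_less (shft u) (shft v) \<longleftrightarrow> lex_less u v"
proof
  assume "lex_less (shft u) (shft v)"
  then obtain n where "\<forall>i<n. u (Suc i) = v (Suc i)" "u (Suc n) < v (Suc n)"
    by (auto simp: lex_less_def shft_def)
  then show "lex_less u v" unfolding lex_less_def using assms
    by (intro exI[of _ "Suc n"]) (auto simp: less_Suc_eq_0_disj)
next
  assume "lex_less u v"
  then obtain n where n: "\<forall>i<n. u i = v i" "u n < v n" by (auto simp: lex_less_def)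
  with assms obtain m where "n = Suc m" by (cases n) auto
  with n show "lex_less (shft u) (shft v)" unfolding lex_less_def shft_def
    by (intro exI[of _ m]) auto
qed

lemma shft_lex_le: "u 0 = v 0 \<Longrightarrow> lex_le u v \<Longrightarrow> lex_le (shft u) (shft v)"
  unfolding lex_le_def using shft_lex_less by blast

section \<open>Closed sets of the Cantor space\<close>

definition prefix_closed :: "'a word set \<Rightarrow> bool" where
  "prefix_closed S \<longleftrightarrow> (\<forall>w. (\<forall>n. \<exists>s\<in>S. \<forall>i<n. s i = w i) \<longrightarrow> w \<in> S)"

definition prefix_determined :: "nat \<Rightarrow> 'a word set \<Rightarrow> bool" where
  "prefix_determined n X \<longleftrightarrow> (\<forall>v v'. (\<forall>i<n. v i = v' i) \<longrightarrow> (v \<in> X \<longleftrightarrow> v' \<in> X))"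

lemma closedin_prefix_closed:
  assumes "closedin cantor_top S" shows "prefix_closed S"
  unfolding prefix_closed_def
proof (intro allI impI)
  fix w assume approx: "\<forall>n. \<exists>s\<in>S. \<forall>i<n. s i = w i"
  show "w \<in> S"
  proof (rule ccontr)
    assume "w \<notin> S"
    moreover have "openin cantor_top (UNIV - S)"
      using assms by (simp add: closedin_def cantor_top_def)
    ultimately have "\<exists>U. finite {i \<in> UNIV. U i \<noteq> topspace (discrete_topology UNIV)} \<and>
        (\<forall>i\<in>UNIV. openin (discrete_topology UNIV) (U i)) \<and> w \<in> Pi\<^sub>E UNIV U \<and> Pi\<^sub>E UNIV U \<subseteq> UNIV - S"
      unfolding cantor_top_def openin_product_topology_alt by blast
    then obtain U where U: "finite {i. U i \<noteq> UNIV}" "w \<in> Pi\<^sub>E UNIV U" "Pi\<^sub>E UNIV U \<subseteq> UNIV - S"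
      by auto
    obtain n where n: "\<forall>i\<in>{i. U i \<noteq> UNIV}. i < n"
      using U(1) finite_nat_set_iff_bounded by blast
    obtain s where s: "s \<in> S" "\<forall>i<n. s i = w i" using approx by blast
    have "s i \<in> U i" for i
    proof (cases "i < n")
      case True then show ?thesis using s U(2) by (auto simp: PiE_def)
    next
      case False then show ?thesis using n by auto
    qed
    then have "s \<in> Pi\<^sub>E UNIV U" by (auto simp: PiE_def)
    then show False using U(3) s(1) by auto
  qed
qed

lemma prefix_determined_openin:
  assumes "prefix_determined n X" shows "openin cantor_top X"
  unfolding cantor_top_def openin_product_topology_alt
proof (intro ballI)
  fix x assume x: "x \<in> X"
  define U where "U i = (if i < n then {x i} else UNIV)" for i
  have "{i. U i \<noteq> UNIV} \<subseteq> {..<n}" by (auto simp: U_def)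
  then have "finite {i \<in> UNIV. U i \<noteq> topspace (discrete_topology UNIV)}"
    by (simp add: finite_subset)
  moreover have "x \<in> Pi\<^sub>E UNIV U" by (auto simp: U_def)
  moreover have "Pi\<^sub>E UNIV U \<subseteq> X"
  proof
    fix v assume "v \<in> Pi\<^sub>E UNIV U"
    have "x i = v i" if "i < n" for i
    proof -
      have "v i \<in> U i" using \<open>v \<in> Pi\<^sub>E UNIV U\<close> by (auto simp: PiE_def Pi_def)
      then show ?thesis using that by (simp add: U_def)
    qed
    then have "\<forall>i<n. x i = v i" by blast
    then show "v \<in> X" using assms x unfolding prefix_determined_def by blast
  qed
  ultimately show "\<exists>U. finite {i \<in> UNIV. U i \<noteq> topspace (discrete_topology UNIV)} \<and>
       (\<forall>i\<in>UNIV. openin (discrete_topology UNIV) (U i)) \<and> x \<in> Pi\<^sub>E UNIV U \<and> Pi\<^sub>E UNIV U \<subseteq> X"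
    by (intro exI[of _ U]) simp
qed

lemma prefix_determined_prefix_closed:
  assumes "prefix_determined n X" shows "prefix_closed X"
  using assms unfolding prefix_closed_def prefix_determined_def by blast

lemma prefix_closed_Int:
  assumes "prefix_closed S" "prefix_closed T" shows "prefix_closed (S \<inter> T)"
  unfolding prefix_closed_def
proof (intro allI impI)
  fix w assume approx: "\<forall>n. \<exists>s\<in>S \<inter> T. \<forall>i<n. s i = w i"
  then have "w \<in> S" "w \<in> T"
    using assms unfolding prefix_closed_def by (meson IntD1 IntD2)+
  then show "w \<in> S \<inter> T" by simp
qed

lemma prefix_determined_differ_before:
  "prefix_determined n {v. \<exists>i<n. (\<forall>j<i. v j = m j) \<and> R i (v i)}"
  unfolding prefix_determined_def
proof (intro allI impI)
  fix v v' :: "'a word" assume "\<forall>i<n. v i = v' i"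
  then have "i < n \<Longrightarrow> (\<forall>j<i. v j = m j) \<and> R i (v i) \<longleftrightarrow> (\<forall>j<i. v' j = m j) \<and> R i (v' i)" for i
    by auto
  then show "v \<in> {v. \<exists>i<n. (\<forall>j<i. v j = m j) \<and> R i (v i)} \<longleftrightarrow>
      v' \<in> {v. \<exists>i<n. (\<forall>j<i. v j = m j) \<and> R i (v i)}"
    by blast
qed

lemma openin_lex_greater: "openin cantor_top {v. lex_less w v}"
proof -
  have "{v. lex_less w v} = (\<Union>n. {v. \<exists>i<Suc n. (\<forall>j<i. v j = w j) \<and> w i < v i})"
    unfolding lex_less_def by (auto; metis lessI)
  moreover have "openin cantor_top {v. \<exists>i<Suc n. (\<forall>j<i. v j = w j) \<and> w i < v i}" for n
    by (rule prefix_determined_openin[OF prefix_determined_differ_before])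
  ultimately show ?thesis by (auto intro!: openin_Union)
qed

lemma openin_lex_less: "openin cantor_top {v. lex_less v w}"
proof -
  have "{v. lex_less v w} = (\<Union>n. {v. \<exists>i<Suc n. (\<forall>j<i. v j = w j) \<and> v i < w i})"
    unfolding lex_less_def by (auto; metis lessI)
  moreover have "openin cantor_top {v. \<exists>i<Suc n. (\<forall>j<i. v j = w j) \<and> v i < w i}" for n
    by (rule prefix_determined_openin[OF prefix_determined_differ_before])
  ultimately show ?thesis by (auto intro!: openin_Union)
qed

lemma prefix_closed_greedy_word:
  fixes S :: "'a word set" and pick :: "'a set \<Rightarrow> 'a"
  assumes "prefix_closed S" "S \<noteq> {}" and pick: "\<And>C. C \<noteq> {} \<Longrightarrow> pick C \<in> C"
  obtains m where "m \<in> S" "\<And>k. m k = pick {s k | s. s \<in> S \<and> (\<forall>i<k. s i = m i)}"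
proof -
  define C where "C p = {s (length p) | s. s \<in> S \<and> (\<forall>i<length p. s i = p ! i)}" for p :: "'a list"
  define pre where "pre = rec_nat [] (\<lambda>_ p. p @ [pick (C p)])"
  have pre_Suc: "pre (Suc n) = pre n @ [pick (C (pre n))]" for n
    by (simp add: pre_def)
  have len: "length (pre n) = n" for n
    by (induction n) (simp_all add: pre_def)
  have extends: "\<exists>s\<in>S. \<forall>i<n. s i = pre n ! i" for n
  proof (induction n)
    case 0 then show ?case using assms(2) by auto
  next
    case (Suc n)
    then have "C (pre n) \<noteq> {}" using len by (auto simp: C_def)
    then have "pick (C (pre n)) \<in> C (pre n)" by (rule pick)
    then obtain s where "s \<in> S" "\<forall>i<n. s i = pre n ! i" "pick (C (pre n)) = s n"
      unfolding C_def len by blast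
    then show ?case by (intro bexI[of _ s]) (auto simp: pre_Suc nth_append len less_Suc_eq)
  qed
  have pre_stable: "i < m \<Longrightarrow> m \<le> n \<Longrightarrow> pre n ! i = pre m ! i" for i m n
    by (induction n) (auto simp: pre_Suc nth_append len le_Suc_eq)
  define m where "m i = pre (Suc i) ! i" for i
  have m_pre: "i < n \<Longrightarrow> pre n ! i = m i" for i n
    using pre_stable[of i "Suc i" n] by (simp add: m_def)
  have "m \<in> S"
    using assms(1) extends m_pre unfolding prefix_closed_def by metis
  moreover have "m k = pick {s k | s. s \<in> S \<and> (\<forall>i<k. s i = m i)}" for k
  proof -
    have "C (pre k) = {s k | s. s \<in> S \<and> (\<forall>i<k. s i = m i)}"
      using m_pre len by (simp add: C_def)
    then show ?thesis by (simp add: m_def pre_Suc nth_append len)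
  qed
  ultimately show thesis using that by blast
qed

lemma prefix_closed_has_lex_min:
  fixes S :: "('a::{linorder,finite}) word set"
  assumes "prefix_closed S" "S \<noteq> {}"
  obtains m where "m \<in> S" "\<And>s. s \<in> S \<Longrightarrow> lex_le m s"
proof -
  obtain m where m: "m \<in> S" and letter: "\<And>k. m k = Min {s k | s. s \<in> S \<and> (\<forall>i<k. s i = m i)}"
    using prefix_closed_greedy_word[OF assms Min_in[OF finite]] by blast
  have "lex_le m s" if "s \<in> S" for s
  proof (cases "m = s")
    case False
    then obtain k where k: "\<forall>i<k. m i = s i" "m k \<noteq> s k" by (rule first_difference)
    have "m k \<le> s k" unfolding letter[of k] using that k(1) by (intro Min_le) auto
    then have "m k < s k" using k(2) by simp
    with k(1) show ?thesis unfolding lex_le_def lex_less_def by blast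
  qed (simp add: lex_le_def)
  with m that show thesis by blast
qed

lemma prefix_closed_has_lex_max:
  fixes S :: "('a::{linorder,finite}) word set"
  assumes "prefix_closed S" "S \<noteq> {}"
  obtains m where "m \<in> S" "\<And>s. s \<in> S \<Longrightarrow> lex_le s m"
proof -
  obtain m where m: "m \<in> S" and letter: "\<And>k. m k = Max {s k | s. s \<in> S \<and> (\<forall>i<k. s i = m i)}"
    using prefix_closed_greedy_word[OF assms Max_in[OF finite]] by blast
  have "lex_le s m" if "s \<in> S" for s
  proof (cases "m = s")
    case False
    then obtain k where k: "\<forall>i<k. m i = s i" "m k \<noteq> s k" by (rule first_difference)
    have "s k \<le> m k" unfolding letter[of k] using that k(1) by (intro Max_ge) auto
    then have "s k < m k" using k(2) by simp
    with k(1) show ?thesis unfolding lex_le_def lex_less_def by (metis (full_types))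
  qed (simp add: lex_le_def)
  with m that show thesis by blast
qed

section \<open>The distribution function of a measure on a shift\<close>

lemma measure_singleton_nonatomic:
  assumes "nonatomic M" "{w} \<in> sets M" shows "measure M {w} = 0"
proof -
  have "emeasure M {w} = 0"
  proof (rule ccontr)
    assume "emeasure M {w} \<noteq> 0"
    then obtain B where "B \<subseteq> {w}" "0 < emeasure M B" "emeasure M B < emeasure M {w}"
      using assms unfolding nonatomic_def by (metis not_gr_zero)
    moreover have "B = {} \<or> B = {w}" using \<open>B \<subseteq> {w}\<close> by auto
    ultimately show False by auto
  qed
  then show ?thesis by (simp add: measure_def)
qed

definition take_word :: "'a word \<Rightarrow> nat \<Rightarrow> 'a list" where
  "take_word u n = map u [0..<n]"

lemma Cyl_take_word: "Cyl L (take_word u n) = {v\<in>L. \<forall>i<n. v i = u i}"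
  by (auto simp: Cyl_def take_word_def)

definition lex_atMost :: "('a::linorder) word set \<Rightarrow> 'a word \<Rightarrow> 'a word set" where
  "lex_atMost L w = {v\<in>L. lex_le v w}"

locale shift_cdf = prob_space M for M :: "('a::{linorder,finite}) word measure" +
  fixes L :: "'a word set"
  assumes shift: "is_shift L" and borel_prob: "is_borel_prob_on L M"
    and nonatomic: "nonatomic M" and Cyl_pos: "\<And>v. Cyl L v \<noteq> {} \<Longrightarrow> measure M (Cyl L v) > 0"
begin

lemma space_eq: "space M = L"
  using borel_prob by (simp add: is_borel_prob_on_def)

lemma prefix_closed_L: "prefix_closed L"
  using shift closedin_prefix_closed by (auto simp: is_shift_def)

lemma shft_in_L: "w \<in> L \<Longrightarrow> shft w \<in> L"
  using shift by (auto simp: is_shift_def)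

lemma L_nonempty: "L \<noteq> {}"
  using not_empty space_eq by simp

lemma openin_Int_sets: "openin cantor_top U \<Longrightarrow> L \<inter> U \<in> sets M"
  using borel_prob unfolding is_borel_prob_on_def borel_sets_on_def
  by (auto intro: sigma_sets.Basic)

lemma prefix_determined_sets: "prefix_determined n X \<Longrightarrow> L \<inter> X \<in> sets M"
  using openin_Int_sets prefix_determined_openin by blast

lemma lex_atMost_sets: "lex_atMost L w \<in> sets M"
proof -
  have "lex_atMost L w = space M - (L \<inter> {v. lex_less w v})"
    by (auto simp: lex_atMost_def space_eq lex_not_le[symmetric])
  then show ?thesis using openin_Int_sets[OF openin_lex_greater] by simp
qed

lemma lex_lessThan_sets: "{v\<in>L. lex_less v w} \<in> sets M"
  using openin_Int_sets[OF openin_lex_less] by (simp add: Collect_conj_eq Int_commute)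

lemma Cyl_sets: "Cyl L p \<in> sets M"
proof -
  have "Cyl L p = L \<inter> {v. \<forall>i<length p. v i = p ! i}" by (auto simp: Cyl_def)
  moreover have "prefix_determined (length p) {v. \<forall>i<length p. v i = p ! i}"
    by (auto simp: prefix_determined_def)
  ultimately show ?thesis using prefix_determined_sets by simp
qed

lemma lex_atMost_eq: "w \<in> L \<Longrightarrow> lex_atMost L w = {v\<in>L. lex_less v w} \<union> {w}"
  by (auto simp: lex_atMost_def lex_le_def)

lemma singleton_sets: "w \<in> L \<Longrightarrow> {w} \<in> sets M"
proof -
  assume "w \<in> L"
  then have "{w} = lex_atMost L w - {v\<in>L. lex_less v w}"
    by (auto simp: lex_atMost_eq lex_less_irrefl)
  then show ?thesis using lex_atMost_sets lex_lessThan_sets by simp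
qed

lemma measure_singleton: "w \<in> L \<Longrightarrow> measure M {w} = 0"
  using measure_singleton_nonatomic[OF nonatomic singleton_sets] .

definition cdf :: "'a word \<Rightarrow> real" where
  "cdf w = measure M (lex_atMost L w)"

lemma cdf_nonneg: "0 \<le> cdf w"
  by (simp add: cdf_def)

lemma cdf_le_1: "cdf w \<le> 1"
  by (simp add: cdf_def)

lemma cdf_mono: "lex_le v w \<Longrightarrow> cdf v \<le> cdf w"
  unfolding cdf_def lex_atMost_def
  by (rule finite_measure_mono[OF _ lex_atMost_sets[unfolded lex_atMost_def]])
    (auto intro: lex_le_trans)

lemma cdf_lex_lessThan: "w \<in> L \<Longrightarrow> measure M {v\<in>L. lex_less v w} = cdf w"
  unfolding cdf_def lex_atMost_eq
  by (subst finite_measure_Union) (auto simp: lex_lessThan_sets measure_singleton lex_less_irrefl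
      singleton_sets)

lemma cdf_less_between:
  assumes "w1 \<in> L" "w2 \<in> L" "lex_less w1 w2" "lex_less w2 w3"
  shows "cdf w1 < cdf w3"
proof -
  have "w1 \<noteq> w2" "w2 \<noteq> w3" using assms(3,4) lex_less_irrefl by auto
  then obtain i j where ij: "w1 i \<noteq> w2 i" "w2 j \<noteq> w3 j" by (meson ext)
  define n where "n = Suc (max i j)"
  define Z where "Z = Cyl L (take_word w2 n)"
  have Z: "Z = {v\<in>L. \<forall>k<n. v k = w2 k}" by (simp add: Z_def Cyl_take_word)
  have Z_pos: "measure M Z > 0" using Cyl_pos assms(2) Z unfolding Z_def by blast
  have differ: "\<exists>k<n. w1 k \<noteq> w2 k" "\<exists>k<n. w2 k \<noteq> w3 k"
    using ij unfolding n_def by (meson le_imp_less_Suc max.cobounded1 max.cobounded2)+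
  have between: "lex_less w1 v" "lex_less v w3" if "v \<in> Z" for v
  proof -
    have agree: "\<forall>k<n. v k = w2 k" using that Z by simp
    show "lex_less w1 v" by (rule lex_less_by_prefix[OF assms(3) differ(1)]) (use agree in auto)
    show "lex_less v w3" by (rule lex_less_by_prefix[OF assms(4) differ(2)]) (use agree in auto)
  qed
  have disj: "lex_atMost L w1 \<inter> Z = {}"
    using between by (auto simp: lex_atMost_def lex_not_le[symmetric])
  have sub: "lex_atMost L w1 \<union> Z \<subseteq> lex_atMost L w3"
    using between assms(3,4) Z
    by (auto simp: lex_atMost_def lex_le_def intro: lex_le_less_trans lex_less_trans)
  have "cdf w1 + measure M Z = measure M (lex_atMost L w1 \<union> Z)"
    using finite_measure_Union[OF lex_atMost_sets _ disj] Cyl_sets Z_def by (simp add: cdf_def)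
  also have "\<dots> \<le> cdf w3" unfolding cdf_def by (rule finite_measure_mono[OF sub lex_atMost_sets])
  finally show ?thesis using Z_pos by simp
qed

lemma cdf_le_add_Cyl:
  assumes "lex_less u v" "\<forall>i<n. v i = u i"
  shows "cdf v \<le> cdf u + measure M (Cyl L (take_word u n))"
proof -
  have "lex_atMost L v \<subseteq> lex_atMost L u \<union> Cyl L (take_word u n)"
    using lex_between_agrees[OF _ _ assms(2)]
    by (auto simp: lex_atMost_def Cyl_take_word lex_not_le[symmetric])
  then have "cdf v \<le> measure M (lex_atMost L u \<union> Cyl L (take_word u n))"
    unfolding cdf_def by (intro finite_measure_mono) (auto intro: lex_atMost_sets Cyl_sets)
  also have "\<dots> \<le> cdf u + measure M (Cyl L (take_word u n))"
    unfolding cdf_def by (rule measure_Un_le[OF lex_atMost_sets Cyl_sets])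
  finally show ?thesis .
qed

lemma measure_Cyl_take_word_tendsto_0:
  assumes "u \<in> L" shows "(\<lambda>n. measure M (Cyl L (take_word u n))) \<longlonglongrightarrow> 0"
proof -
  have "decseq (\<lambda>n. Cyl L (take_word u n))"
    unfolding decseq_def Cyl_take_word by auto
  moreover have "(\<Inter>n. Cyl L (take_word u n)) = {u}"
    using assms by (auto simp: Cyl_take_word fun_eq_iff dest: spec[of _ "Suc _"])
  ultimately show ?thesis
    using finite_Lim_measure_decseq[of "\<lambda>n. Cyl L (take_word u n)"] Cyl_sets measure_singleton[OF assms]
    by auto
qed

text \<open>This is the right-continuity of \<open>\<phi>\<^sub>\<mu>\<close> for the lexicographic order.\<close>

lemma prefix_closed_cdf_ge: "prefix_closed {v\<in>L. x \<le> cdf v}"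
  unfolding prefix_closed_def
proof (intro allI impI)
  fix w assume approx: "\<forall>n. \<exists>s\<in>{v\<in>L. x \<le> cdf v}. \<forall>i<n. s i = w i"
  then have "\<forall>n. \<exists>s\<in>L. \<forall>i<n. s i = w i" by blast
  then have "w \<in> L" using prefix_closed_L unfolding prefix_closed_def by blast
  moreover have "x \<le> cdf w"
  proof (rule ccontr)
    assume "\<not> x \<le> cdf w"
    then have "0 < x - cdf w" by simp
    from order_tendstoD(2)[OF measure_Cyl_take_word_tendsto_0[OF \<open>w \<in> L\<close>] this]
    obtain N where N: "measure M (Cyl L (take_word w N)) < x - cdf w"
      by (auto simp: eventually_sequentially)
    obtain s where s: "s \<in> L" "x \<le> cdf s" "\<forall>i<N. s i = w i" using approx by blast
    have "cdf s < x"
    proof (cases "lex_le s w")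
      case True then show ?thesis using cdf_mono[OF True] \<open>\<not> x \<le> cdf w\<close> by linarith
    next
      case False
      then have "cdf s \<le> cdf w + measure M (Cyl L (take_word w N))"
        using cdf_le_add_Cyl[of w s N] s(3) by (simp add: lex_not_le)
      then show ?thesis using N by linarith
    qed
    with s(2) show False by simp
  qed
  ultimately show "w \<in> {v\<in>L. x \<le> cdf v}" by simp
qed

text \<open>\<open>\<phi>\<^sub>\<mu>\<close> is left-continuous: the strict lower set of \<open>m\<close> is exhausted by prefix-determined,
  hence closed, sets, and their largest elements approach \<open>m\<close> from below.\<close>

lemma cdf_approx_below:
  assumes "m \<in> L" "0 \<le> y" "y < cdf m"
  obtains p where "p \<in> L" "lex_less p m" "y < cdf p"
proof -
  define A where "A n = L \<inter> {v. \<exists>i<n. (\<forall>j<i. v j = m j) \<and> v i < m i}" for n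
  have A_sets: "A n \<in> sets M" for n
    unfolding A_def by (rule prefix_determined_sets[OF prefix_determined_differ_before])
  have "A k \<subseteq> A n" if "k \<le> n" for k n
    using that unfolding A_def by (auto intro: order.strict_trans2)
  then have "incseq A" by (simp add: incseq_def)
  moreover have "(\<Union>n. A n) = {v\<in>L. lex_less v m}"
    unfolding A_def lex_less_def by (auto; metis lessI)
  ultimately have "(\<lambda>n. measure M (A n)) \<longlonglongrightarrow> cdf m"
    using finite_Lim_measure_incseq[of A] A_sets cdf_lex_lessThan[OF assms(1)] by auto
  from order_tendstoD(1)[OF this assms(3)] obtain n where n: "y < measure M (A n)"
    by (auto simp: eventually_sequentially)
  then have "A n \<noteq> {}" using assms(2) by auto
  moreover have "prefix_closed (A n)" unfolding A_def
    by (rule prefix_closed_Int[OF prefix_closed_L prefix_determined_prefix_closed[OF prefix_determined_differ_before]])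
  ultimately obtain p where p: "p \<in> A n" "\<And>v. v \<in> A n \<Longrightarrow> lex_le v p"
    using prefix_closed_has_lex_max by blast
  have "measure M (A n) \<le> cdf p"
    unfolding cdf_def using p(2) A_sets lex_atMost_sets
    by (intro finite_measure_mono) (auto simp: lex_atMost_def A_def)
  moreover have "p \<in> L" "lex_less p m" using p(1) by (auto simp: A_def lex_less_def)
  ultimately show thesis using that n by simp
qed

lemma cdf_surj:
  assumes "0 \<le> x" "x \<le> 1"
  obtains w where "w \<in> L" "cdf w = x"
proof -
  let ?C = "{v\<in>L. x \<le> cdf v}"
  obtain top where "top \<in> L" "\<And>v. v \<in> L \<Longrightarrow> lex_le v top"
    using prefix_closed_has_lex_max[OF prefix_closed_L L_nonempty] by blast
  then have "lex_atMost L top = space M" by (auto simp: lex_atMost_def space_eq)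
  then have "cdf top = 1" by (simp add: cdf_def prob_space)
  with \<open>top \<in> L\<close> assms(2) have "?C \<noteq> {}" by auto
  then obtain m where m: "m \<in> ?C" "\<And>v. v \<in> ?C \<Longrightarrow> lex_le m v"
    using prefix_closed_has_lex_min[OF prefix_closed_cdf_ge] by blast
  have "cdf m = x"
  proof (rule ccontr)
    assume "cdf m \<noteq> x"
    with m(1) have "m \<in> L" "x < cdf m" by auto
    then obtain p where "p \<in> L" "lex_less p m" "x < cdf p"
      using cdf_approx_below assms(1) by blast
    then show False using m(2)[of p] lex_le_less_trans lex_less_irrefl by auto
  qed
  with m(1) that show thesis by blast
qed

lemma cdf_fibre_no_three:
  assumes "u \<in> L" "v \<in> L" "w \<in> L" "cdf u = cdf v" "cdf v = cdf w"
  shows "u = v \<or> v = w \<or> u = w"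
proof -
  have no_chain: "\<not> (lex_less x y \<and> lex_less y z)" if "x \<in> {u,v,w}" "y \<in> {u,v,w}" "z \<in> {u,v,w}" for x y z
    using cdf_less_between[of x y z] that assms by auto
  show ?thesis
    using lex_less_total[of u v] lex_less_total[of v w] lex_less_total[of u w]
      no_chain[of u v w] no_chain[of w v u] no_chain[of v u w]
      no_chain[of w u v] no_chain[of u w v] no_chain[of v w u]
    by blast
qed

lemma cdf_fibre_eq_pair:
  assumes "v1 \<in> L" "v2 \<in> L" "v1 \<noteq> v2" "cdf v1 = cdf v2"
  shows "{v\<in>L. cdf v = cdf v1} = {v1, v2}"
  using cdf_fibre_no_three[of v1 v2] assms by fastforce

section \<open>The coding of points of \<open>[0,1)\<close> by words\<close>

lemma wmin_lex_min: "wmin L \<in> L \<and> (\<forall>v\<in>L. lex_le (wmin L) v)"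
proof -
  obtain m where "m \<in> L" "\<And>s. s \<in> L \<Longrightarrow> lex_le m s"
    using prefix_closed_has_lex_min[OF prefix_closed_L L_nonempty] by blast
  then have "\<exists>!w. w \<in> L \<and> (\<forall>w'\<in>L. lex_le w w')"
    using lex_le_antisym by blast
  then show ?thesis unfolding wmin_def by (rule theI')
qed

lemma phi_mu_eq_cdf: "phi_mu L M = cdf"
proof
  fix w
  have "lex_Icc L (wmin L) w = lex_atMost L w"
    using wmin_lex_min by (auto simp: lex_Icc_def lex_atMost_def)
  then show "phi_mu L M w = cdf w" by (simp add: phi_mu_def cdf_def)
qed

lemma cdf_fibre_pair_max:
  assumes "v1 \<in> L" "v2 \<in> L" "lex_less v1 v2" "cdf v1 = cdf v2" "v \<in> L" "cdf v = cdf v2"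
  shows "lex_le v v2"
proof -
  have "v1 \<noteq> v2" using assms(3) lex_less_irrefl by blast
  then have fibre: "{v\<in>L. cdf v = cdf v1} = {v1, v2}" by (rule cdf_fibre_eq_pair[OF assms(1,2) _ assms(4)])
  have "v \<in> {v\<in>L. cdf v = cdf v1}" using assms(4-6) by simp
  with fibre have "v = v1 \<or> v = v2" by simp
  then show ?thesis using assms(3) by (auto simp: lex_le_def)
qed

lemma phi_fibre_max:
  assumes "w \<in> L" "\<And>v. v \<in> L \<Longrightarrow> cdf v = cdf w \<Longrightarrow> lex_le v w"
  shows "phi L M w = (cdf w, True)"
proof -
  have "\<not> (\<exists>w'. lex_less w w' \<and> {v \<in> L. cdf v = cdf w} = {w, w'})"
  proof
    assume "\<exists>w'. lex_less w w' \<and> {v \<in> L. cdf v = cdf w} = {w, w'}"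
    then obtain w' where "lex_less w w'" "w' \<in> L" "cdf w' = cdf w" by blast
    then have "lex_less w' w'" using assms(2)[of w'] lex_le_less_trans by blast
    then show False using lex_less_irrefl by blast
  qed
  then show ?thesis unfolding phi_def phi_mu_eq_cdf by simp
qed

lemma phi_fibre_lower:
  assumes "v1 \<in> L" "v2 \<in> L" "lex_less v1 v2" "cdf v1 = cdf v2"
  shows "phi L M v1 = (cdf v1, False)"
proof -
  have "v1 \<noteq> v2" using assms(3) lex_less_irrefl by blast
  then have "{v \<in> L. cdf v = cdf v1} = {v1, v2}" by (rule cdf_fibre_eq_pair[OF assms(1,2) _ assms(4)])
  with assms(3) show ?thesis unfolding phi_def phi_mu_eq_cdf by auto
qed

lemma inj_on_phi: "inj_on (phi L M) L"
proof (rule inj_onI)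
  have no_collision: "phi L M v1 \<noteq> phi L M v2"
    if "v1 \<in> L" "v2 \<in> L" "lex_less v1 v2" "cdf v1 = cdf v2" for v1 v2
    using phi_fibre_lower[OF that] phi_fibre_max[OF that(2) cdf_fibre_pair_max[OF that]] by simp
  fix v1 v2 assume v: "v1 \<in> L" "v2 \<in> L" "phi L M v1 = phi L M v2"
  then have cdf_eq: "cdf v1 = cdf v2" by (simp add: phi_def phi_mu_eq_cdf split: if_splits)
  show "v1 = v2"
  proof (rule ccontr)
    assume "v1 \<noteq> v2"
    then consider "lex_less v1 v2" | "lex_less v2 v1" using lex_less_total by blast
    then show False
      using no_collision[OF v(1,2) _ cdf_eq] no_collision[OF v(2,1) _ cdf_eq[symmetric]] v(3)
      by cases auto
  qed
qed

definition word_of :: "real \<Rightarrow> 'a word" where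
  "word_of x = phi_inv L M (iota x)"

lemma word_of_is_fibre_max:
  assumes "0 \<le> x" "x \<le> 1"
  shows word_of_in_L: "word_of x \<in> L"
    and cdf_word_of: "cdf (word_of x) = x"
    and le_word_of: "\<And>v. v \<in> L \<Longrightarrow> cdf v = x \<Longrightarrow> lex_le v (word_of x)"
proof -
  obtain w where w: "w \<in> L" "cdf w = x" using cdf_surj[OF assms] .
  obtain wm where wm: "wm \<in> L" "cdf wm = x" "\<And>v. v \<in> L \<Longrightarrow> cdf v = x \<Longrightarrow> lex_le v wm"
  proof (cases "\<exists>w'\<in>L. cdf w' = x \<and> lex_less w w'")
    case True
    then obtain w' where w': "w' \<in> L" "cdf w' = x" "lex_less w w'" by blast
    show thesis
      by (rule that[OF w'(1,2)]) (use cdf_fibre_pair_max[OF w(1) w'(1,3)] w w' in auto)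
  next
    case False
    then show thesis using that w lex_not_le by blast
  qed
  have "phi L M wm = (x, True)" using phi_fibre_max[of wm] wm by simp
  then have "word_of x = wm" unfolding word_of_def phi_inv_def iota_def
    by (rule the_inv_into_f_eq[OF inj_on_phi _ wm(1)])
  with wm show "word_of x \<in> L" "cdf (word_of x) = x"
    "\<And>v. v \<in> L \<Longrightarrow> cdf v = x \<Longrightarrow> lex_le v (word_of x)" by simp_all
qed

lemma word_of_strict_mono:
  assumes "0 \<le> x" "x < y" "y \<le> 1" shows "lex_less (word_of x) (word_of y)"
proof (rule ccontr)
  assume "\<not> lex_less (word_of x) (word_of y)"
  then have "cdf (word_of y) \<le> cdf (word_of x)" by (simp add: lex_not_less cdf_mono)
  then show False using cdf_word_of[of x] cdf_word_of[of y] assms by simp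
qed

lemma T_L_eq: "T_L L M x = cdf (shft (word_of x))"
  by (simp add: T_L_def T_hat_def kappa_def word_of_def phi_def phi_mu_eq_cdf)

lemma I_La_eq: "I_La L M a = {x\<in>{0..<1}. word_of x 0 = a}"
  using word_of_in_L by (auto simp: I_La_def word_of_def[symmetric] Cyl_def)

lemma word_of_eventually_agrees:
  assumes "0 \<le> x" "x < 1"
  shows "\<forall>\<^sub>F y in at_right x. \<forall>i<n. word_of y i = word_of x i"
proof -
  let ?w = "word_of x"
  define Q where "Q = L \<inter> {v. \<exists>i<n. (\<forall>j<i. v j = ?w j) \<and> ?w i < v i}"
  have near: "\<forall>\<^sub>F y in at_right x. x < y \<and> y < 1"
    using assms(2) by (auto simp: eventually_at_right_field)
  have "\<forall>\<^sub>F y in at_right x. word_of y \<notin> Q"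
  proof (cases "Q = {}")
    case False
    have "prefix_closed Q" unfolding Q_def
      by (rule prefix_closed_Int[OF prefix_closed_L prefix_determined_prefix_closed[OF prefix_determined_differ_before]])
    then obtain m where m: "m \<in> Q" "\<And>v. v \<in> Q \<Longrightarrow> lex_le m v"
      using prefix_closed_has_lex_min False by blast
    obtain i where "\<forall>j<i. m j = ?w j" "?w i < m i" using m(1) by (auto simp: Q_def)
    then have "lex_less ?w m" unfolding lex_less_def by (intro exI[of _ i]) auto
    have "x \<le> cdf m"
      using cdf_mono[of ?w m] \<open>lex_less ?w m\<close> cdf_word_of assms by (simp add: lex_le_def)
    moreover have "cdf m \<noteq> x"
    proof
      assume "cdf m = x"
      then have "lex_le m ?w" using le_word_of[of x m] m(1) assms by (simp add: Q_def)
      then show False using \<open>lex_less ?w m\<close> lex_le_less_trans lex_less_irrefl by blast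
    qed
    ultimately have "x < cdf m" by simp
    then have "\<forall>\<^sub>F y in at_right x. y < cdf m"
      by (auto simp: eventually_at_right_field)
    with near show ?thesis
    proof eventually_elim
      case (elim y)
      show ?case
      proof
        assume "word_of y \<in> Q"
        then have "cdf m \<le> cdf (word_of y)" using m(2) cdf_mono by blast
        then show False using cdf_word_of[of y] elim assms by simp
      qed
    qed
  qed simp
  with near show ?thesis
  proof eventually_elim
    case (elim y)
    then have "lex_less ?w (word_of y)" using word_of_strict_mono[of x y] assms by simp
    then obtain k where k: "\<forall>j<k. ?w j = word_of y j" "?w k < word_of y k"
      unfolding lex_less_def by blast
    have "\<not> k < n"
    proof
      assume "k < n"
      moreover have "\<forall>j<k. word_of y j = ?w j" using k(1) by simp
      moreover have "word_of y \<in> L" using word_of_in_L[of y] elim assms by simp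
      ultimately have "word_of y \<in> Q" using k(2) unfolding Q_def by auto
      then show False using elim by blast
    qed
    with k(1) show ?case by auto
  qed
qed

lemma continuous_at_right_T_L:
  assumes "0 \<le> x" "x < 1" shows "continuous (at_right x) (T_L L M)"
  unfolding continuous_within
proof (rule tendstoI)
  fix e :: real assume "0 < e"
  let ?s = "shft (word_of x)"
  have "?s \<in> L" using shft_in_L word_of_in_L assms by simp
  from order_tendstoD(2)[OF measure_Cyl_take_word_tendsto_0[OF this] \<open>0 < e\<close>]
  obtain n where n: "measure M (Cyl L (take_word ?s n)) < e"
    by (auto simp: eventually_sequentially)
  have "\<forall>\<^sub>F y in at_right x. x < y \<and> y < 1"
    using assms(2) by (auto simp: eventually_at_right_field)
  with word_of_eventually_agrees[OF assms, of "Suc n"]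
  show "\<forall>\<^sub>F y in at_right x. dist (T_L L M y) (T_L L M x) < e"
  proof eventually_elim
    case (elim y)
    then have agree: "\<forall>i<Suc n. word_of y i = word_of x i" and "x < y" "y < 1" by auto
    then have "lex_less (word_of x) (word_of y)" using word_of_strict_mono[of x y] assms by simp
    moreover have "word_of x 0 = word_of y 0" using agree by simp
    ultimately have less: "lex_less ?s (shft (word_of y))" by (simp add: shft_lex_less)
    have "\<forall>i<n. shft (word_of y) i = ?s i" using agree by (simp add: shft_def)
    then have "cdf (shft (word_of y)) \<le> cdf ?s + measure M (Cyl L (take_word ?s n))"
      by (rule cdf_le_add_Cyl[OF less])
    moreover have "cdf ?s \<le> cdf (shft (word_of y))" using less cdf_mono lex_le_def by blast
    ultimately show ?case using n by (simp add: T_L_eq dist_real_def)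
  qed
qed

lemma word_of_threshold:
  assumes "prefix_closed U" "U \<subseteq> L"
    and up: "\<And>v v'. v \<in> U \<Longrightarrow> v' \<in> L \<Longrightarrow> lex_le v v' \<Longrightarrow> v' \<in> U"
  shows "\<exists>t. 0 \<le> t \<and> t \<le> 1 \<and> (\<forall>x. 0 \<le> x \<longrightarrow> x < 1 \<longrightarrow> (word_of x \<in> U \<longleftrightarrow> t \<le> x))"
proof (cases "U = {}")
  case True then show ?thesis by (intro exI[of _ 1]) auto
next
  case False
  then obtain m where m: "m \<in> U" "\<And>v. v \<in> U \<Longrightarrow> lex_le m v"
    using prefix_closed_has_lex_min[OF assms(1)] by blast
  have "word_of x \<in> U \<longleftrightarrow> cdf m \<le> x" if "0 \<le> x" "x < 1" for x
  proof
    assume "word_of x \<in> U"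
    then have "cdf m \<le> cdf (word_of x)" using m(2) cdf_mono by blast
    then show "cdf m \<le> x" using cdf_word_of[of x] that by simp
  next
    assume "cdf m \<le> x"
    have "lex_le m (word_of x)"
    proof (rule ccontr)
      assume "\<not> lex_le m (word_of x)"
      then have "lex_le (word_of x) m" using lex_not_le lex_le_def by blast
      then have "cdf (word_of x) \<le> cdf m" by (rule cdf_mono)
      then have "cdf m = x" using cdf_word_of[of x] that \<open>cdf m \<le> x\<close> by simp
      then have "lex_le m (word_of x)" using le_word_of[of x m] m(1) assms(2) that by auto
      with \<open>\<not> lex_le m (word_of x)\<close> show False by blast
    qed
    then show "word_of x \<in> U" using up[OF m(1)] word_of_in_L[of x] that by simp
  qed
  then show ?thesis using cdf_nonneg cdf_le_1 by blast
qed

lemma I_La_atLeastLessThan: "\<exists>b c. I_La L M a = {b..<c}"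
proof -
  have threshold: "\<exists>t. 0 \<le> t \<and> t \<le> 1 \<and> (\<forall>x. 0 \<le> x \<longrightarrow> x < 1 \<longrightarrow> (R (word_of x 0) \<longleftrightarrow> t \<le> x))"
    if "mono R" for R :: "'a \<Rightarrow> bool"
  proof -
    have "prefix_determined 1 {v. R (v 0)}" by (simp add: prefix_determined_def)
    then have "prefix_closed {v\<in>L. R (v 0)}"
      using prefix_closed_Int[OF prefix_closed_L prefix_determined_prefix_closed]
      by (simp add: Collect_conj_eq)
    moreover have "v' \<in> {v\<in>L. R (v 0)}" if "v \<in> {v\<in>L. R (v 0)}" "v' \<in> L" "lex_le v v'" for v v'
      using that monoD[OF \<open>mono R\<close> lex_le_first_letter[OF that(3)]] by auto
    ultimately obtain t where t: "0 \<le> t" "t \<le> 1"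
      "\<forall>x. 0 \<le> x \<longrightarrow> x < 1 \<longrightarrow> (word_of x \<in> {v\<in>L. R (v 0)} \<longleftrightarrow> t \<le> x)"
      using word_of_threshold[of "{v\<in>L. R (v 0)}"] by blast
    then show ?thesis using word_of_in_L by (intro exI[of _ t]) auto
  qed
  obtain b where b: "0 \<le> b" "\<forall>x. 0 \<le> x \<longrightarrow> x < 1 \<longrightarrow> (a \<le> word_of x 0 \<longleftrightarrow> b \<le> x)"
    using threshold[of "\<lambda>c. a \<le> c"] order_trans unfolding mono_def le_bool_def by blast
  obtain c where c: "c \<le> 1" "\<forall>x. 0 \<le> x \<longrightarrow> x < 1 \<longrightarrow> (a < word_of x 0 \<longleftrightarrow> c \<le> x)"
    using threshold[of "\<lambda>c. a < c"] order.strict_trans2 unfolding mono_def le_bool_def by blast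
  have "x \<in> I_La L M a \<longleftrightarrow> x \<in> {b..<c}" for x
  proof (cases "0 \<le> x \<and> x < 1")
    case True
    have "word_of x 0 = a \<longleftrightarrow> a \<le> word_of x 0 \<and> \<not> a < word_of x 0" by auto
    also have "\<dots> \<longleftrightarrow> b \<le> x \<and> x < c" using b(2) c(2) True by auto
    finally show ?thesis using True by (simp add: I_La_eq)
  next
    case False
    then show ?thesis using b(1) c(1) by (auto simp: I_La_eq)
  qed
  then show ?thesis by blast
qed

text \<open>The words in \<open>(u, v]\<close> all begin with \<open>u 0\<close>, so \<open>\<sigma>\<close> maps them into \<open>(\<sigma> u, \<sigma> v]\<close>;
  invariance turns this inclusion into the inequality.\<close>

lemma cdf_diff_le_shft:
  assumes "shift_invariant M" "u \<in> L" "v \<in> L" "u 0 = v 0" "lex_le u v"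
  shows "cdf v - cdf u \<le> cdf (shft v) - cdf (shft u)"
proof -
  let ?B = "lex_atMost L (shft v) - lex_atMost L (shft u)"
  have sub: "lex_atMost L w \<subseteq> lex_atMost L w'" if "lex_le w w'" for w w'
    using that by (auto simp: lex_atMost_def intro: lex_le_trans)
  have B_sets: "?B \<in> sets M" using lex_atMost_sets by blast
  have measurable: "shft \<in> measurable M M"
    and invariant: "emeasure M (shft -` ?B \<inter> space M) = emeasure M ?B"
    using assms(1) B_sets by (auto simp: shift_invariant_def)
  have preimage_sets: "shft -` ?B \<inter> space M \<in> sets M" by (rule measurable_sets[OF measurable B_sets])
  have "lex_atMost L v - lex_atMost L u \<subseteq> shft -` ?B \<inter> space M"
  proof
    fix w assume "w \<in> lex_atMost L v - lex_atMost L u"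
    then have w: "w \<in> L" "lex_le w v" "lex_less u w" by (auto simp: lex_atMost_def lex_not_le)
    then have "\<forall>i<1. w i = u i" using lex_between_agrees[of u w v 1] assms(4) by simp
    then have "u 0 = w 0" "w 0 = v 0" using assms(4) by simp_all
    then have "lex_less (shft u) (shft w)" "lex_le (shft w) (shft v)"
      using shft_lex_less w(3) shft_lex_le w(2) by blast+
    then show "w \<in> shft -` ?B \<inter> space M"
      using w(1) shft_in_L by (auto simp: lex_atMost_def space_eq lex_not_le)
  qed
  then have "measure M (lex_atMost L v - lex_atMost L u) \<le> measure M (shft -` ?B \<inter> space M)"
    by (rule finite_measure_mono[OF _ preimage_sets])
  also have "\<dots> = measure M ?B" using invariant by (simp add: measure_def)
  finally show ?thesis
    using finite_measure_Diff[OF lex_atMost_sets lex_atMost_sets sub[OF assms(5)]]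
      finite_measure_Diff[OF lex_atMost_sets lex_atMost_sets sub[OF shft_lex_le[OF assms(4,5)]]]
    by (simp add: cdf_def)
qed

lemma T_L_strict_mono_on_I_La:
  assumes "shift_invariant M" shows "strict_mono_on (I_La L M a) (T_L L M)"
proof (rule strict_mono_onI)
  fix x y assume "x \<in> I_La L M a" "y \<in> I_La L M a" "x < y"
  then have xy: "0 \<le> x" "x < y" "y < 1" "word_of x 0 = word_of y 0" by (auto simp: I_La_eq)
  then have "cdf (word_of y) - cdf (word_of x) \<le> cdf (shft (word_of y)) - cdf (shft (word_of x))"
    using word_of_strict_mono[of x y] word_of_in_L[of x] word_of_in_L[of y]
    by (intro cdf_diff_le_shft[OF assms]) (simp_all add: lex_le_def)
  then show "T_L L M x < T_L L M y" using xy cdf_word_of[of x] cdf_word_of[of y] by (simp add: T_L_eq)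
qed

end

theorem mainTheorem9:
  fixes L :: "('a::{linorder,finite}) word set" and M :: "'a word measure"
  assumes "is_shift L"
    and "is_borel_prob_on L M"
    and "shift_invariant M"
    and "nonatomic M"
    and "regular_on L M"
    and "\<And>v. Cyl L v \<noteq> {} \<Longrightarrow> measure M (Cyl L v) > 0"
  shows "{0..<1} = (\<Union>a. I_La L M a) \<and> disjoint_family (I_La L M)
    \<and> (\<forall>a. I_La L M a \<noteq> {} \<longrightarrow> (\<exists>b c. b < c \<and> I_La L M a = {b..<c}))
    \<and> (\<forall>x\<in>{0..<1}. continuous (at_right x) (T_L L M))
    \<and> (\<forall>a. strict_mono_on (I_La L M a) (T_L L M))"
proof -
  interpret shift_cdf M L
    using assms by (simp add: shift_cdf_def shift_cdf_axioms_def is_borel_prob_on_def)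
  have "{0..<1} = (\<Union>a. I_La L M a)" by (auto simp: I_La_eq)
  moreover have "disjoint_family (I_La L M)" by (auto simp: I_La_eq disjoint_family_on_def)
  moreover have "\<exists>b c. b < c \<and> I_La L M a = {b..<c}" if "I_La L M a \<noteq> {}" for a
  proof -
    obtain b c where "I_La L M a = {b..<c}" using I_La_atLeastLessThan by blast
    with that show ?thesis by auto
  qed
  moreover have "continuous (at_right x) (T_L L M)" if "x \<in> {0..<1}" for x
    using continuous_at_right_T_L that by simp
  ultimately show ?thesis using T_L_strict_mono_on_I_La[OF assms(3)] by blast
qed

end
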